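(* Assume $f(x,y)=h(x)g(y)$ where $g:\mathbb{R}^m\to\mathbb{R}$ is bounded and Lipschitz and $h:\mathbb{R}^n\to\mathbb{R}$ is Lipschitz with $\|h\|_\infty\le C_1$. Let $w_*\in C^2(\mathbb{R}^m)$ be the solution of $\mathcal{L}(y,D_yw_*,D^2_{yy}w_* )+g(y)=\lambda_1$ in $\mathbb{R}^m$, $w_*(0)=0$ (with $\lambda_1$ the associated ergodic constant), and let $\chi(y)=|y|^2$. Then: (i) there exists $C_5>0$ such that $|w_*(y)|\le C_5\big(1+\log(1+|y|^2)\big)$ for all $y\in\mathbb{R}^m$; (ii) for every $\eta>0$, $|h(x)w_*(y)|-\eta\chi(y)\le C_1C_5\log(C_1C_5)-C_1C_5\log\eta+\eta$ for all $(x,y)\in\mathbb{R}^n\times\mathbb{R}^m$.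
   Context: Let $n,m\ge1$. $\mathcal{L}(y,q,Y):=-\mathrm{tr}\big(\tau(y)\tau(y)^TY\big)+\alpha\, y\cdot q+b(y)\cdot q$, where $\alpha>0$; $\tau$ is matrix-valued on $\mathbb{R}^m$ with bounded Lipschitz coefficients; $b:\mathbb{R}^m\to\mathbb{R}^m$ is bounded and Lipschitz; there is $\theta>0$ with $\xi\tau(y)\tau(y)^T\xi^T\ge\theta|\xi|^2$ for all $y,\xi$. The pair $(w_*,\lambda_1)$ with $w_*(0)=0$ is the unique solution of the cell problem for $g$. *)

theory Defs
  imports "HOL-Analysis.Analysis"
begin

definition Lop :: "(real^'m \<Rightarrow> real^'d^'m) \<Rightarrow> real \<Rightarrow> (real^'m \<Rightarrow> real^'m)
                   \<Rightarrow> real^'m \<Rightarrow> real^'m \<Rightarrow> real^'m^'m \<Rightarrow> real" where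
  "Lop tau alpha b y q Y = - trace (tau y ** transpose (tau y) ** Y) + alpha * (y \<bullet> q) + b y \<bullet> q"

end

theory Submission
  imports Defs
begin

(*
  A maximum principle with a logarithmic barrier.  Let k be the polynomial growth
  exponent of w and put phi_e(y) = K ln (1 + |y|^2) + e (1 + |y|^2)^(k+1) for e > 0.
  Then w - phi_e attains a global maximum at some y0, where Dw = D phi_e and the second
  derivatives of w along the columns of tau are at most those of phi_e; since the
  diffusion term is a sum of such second derivatives, L(y0, Dw, D^2 w) is at least the
  operator applied to phi_e.  Once |y0| exceeds a radius R independent of e, the drift
  alpha y . D phi_e dominates and makes this larger than K alpha, which is chosen above
  sup L w = sup (lambda1 - g).  So y0 stays in the ball of radius R, whence
  w <= phi_e + max_{|y| <= R} w, and e -> 0 gives w <= K ln (1 + |y|^2) + C.  Applying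
  this to -w gives (i), and (ii) follows from ln t <= t - 1 with
  t = eta (1 + |y|^2) / (C1 C5).
*)

lemma deriv2_nonpos_at_global_max:
  fixes f f' :: "real \<Rightarrow> real"
  assumes f': "\<And>t. (f has_real_derivative f' t) (at t)"
    and f'': "(f' has_real_derivative s) (at a)"
    and max: "\<And>t. f t \<le> f a"
  shows "s \<le> 0"
proof (rule ccontr)
  assume "\<not> s \<le> 0"
  then obtain d where "d > 0" and f'_inc: "\<And>h. 0 < h \<Longrightarrow> h < d \<Longrightarrow> f' a < f' (a + h)"
    using DERIV_pos_inc_right[OF f''] by auto
  have "f' a = 0"
    using DERIV_local_max[OF f' zero_less_one] max by blast
  obtain z where z: "a < z" "z < a + d/2" "f (a + d/2) - f a = (a + d/2 - a) * f' z"
    using MVT2[of a "a + d/2" f f'] f' \<open>d > 0\<close> by auto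
  have "f' z > 0"
    using f'_inc[of "z - a"] z \<open>f' a = 0\<close> by auto
  with \<open>d > 0\<close> have "(a + d/2 - a) * f' z > 0"
    by simp
  with z(3) max[of "a + d/2"] show False
    by linarith
qed

lemma has_real_derivative_along_line:
  fixes u :: "'a::real_normed_vector \<Rightarrow> real"
  assumes "(u has_derivative Du) (at (x + t *\<^sub>R v))"
  shows "((\<lambda>s. u (x + s *\<^sub>R v)) has_real_derivative Du v) (at t)"
proof -
  have "((\<lambda>s. x + s *\<^sub>R v) has_derivative (\<lambda>s. s *\<^sub>R v)) (at t)"
    by (auto intro!: derivative_eq_intros)
  from has_derivative_compose[OF this assms]
  have "((\<lambda>s. u (x + s *\<^sub>R v)) has_derivative (\<lambda>s. Du (s *\<^sub>R v))) (at t)" .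
  moreover have "(\<lambda>s. Du (s *\<^sub>R v)) = (*) (Du v)"
    using has_derivative_linear[OF assms] by (simp add: linear_scale fun_eq_iff)
  ultimately show ?thesis
    by (simp add: has_field_derivative_def)
qed

lemma radial_along_line_has_real_derivative:
  fixes x c :: "'a::real_inner" and G G' :: "real \<Rightarrow> real" and G2 :: real
  assumes G': "\<And>r. r \<ge> 0 \<Longrightarrow> (G has_real_derivative G' r) (at r)"
    and G'_deriv: "(G' has_real_derivative G2) (at (x \<bullet> x))"
  defines "p \<equiv> \<lambda>t. x + t *\<^sub>R c"
  shows "((\<lambda>t. G (p t \<bullet> p t)) has_real_derivative G' (p t \<bullet> p t) * (2 * (p t \<bullet> c))) (at t)"
    and "((\<lambda>t. G' (p t \<bullet> p t) * (2 * (p t \<bullet> c))) has_real_derivative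
           4 * G2 * (x \<bullet> c)\<^sup>2 + 2 * G' (x \<bullet> x) * (c \<bullet> c)) (at 0)"
proof -
  have p_sq: "((\<lambda>t. p t \<bullet> p t) has_real_derivative 2 * (p t \<bullet> c)) (at t)" for t
    unfolding p_def has_field_derivative_def
    by (auto intro!: derivative_eq_intros simp: fun_eq_iff inner_commute algebra_simps)
  have p_c: "((\<lambda>t. 2 * (p t \<bullet> c)) has_real_derivative 2 * (c \<bullet> c)) (at t)" for t
    unfolding p_def has_field_derivative_def
    by (auto intro!: derivative_eq_intros simp: fun_eq_iff algebra_simps)
  show "((\<lambda>t. G (p t \<bullet> p t)) has_real_derivative G' (p t \<bullet> p t) * (2 * (p t \<bullet> c))) (at t)"
    using DERIV_chain2[OF G'[OF inner_ge_zero] p_sq] .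
  have "p 0 = x"
    by (simp add: p_def)
  then have "((\<lambda>t. G' (p t \<bullet> p t)) has_real_derivative G2 * (2 * (x \<bullet> c))) (at 0)"
    using DERIV_chain2[of G' G2, OF _ p_sq[of 0]] G'_deriv by metis
  from DERIV_mult[OF this p_c]
  show "((\<lambda>t. G' (p t \<bullet> p t) * (2 * (p t \<bullet> c))) has_real_derivative
      4 * G2 * (x \<bullet> c)\<^sup>2 + 2 * G' (x \<bullet> x) * (c \<bullet> c)) (at 0)"
    by (rule DERIV_cong) (simp add: \<open>p 0 = x\<close> power2_eq_square)
qed

lemma radial_touching_from_above:
  fixes w :: "'a::real_inner \<Rightarrow> real" and Dw H :: "'a \<Rightarrow> 'a"
    and G G' :: "real \<Rightarrow> real" and G2 :: real
  assumes w_D1: "\<And>y. (w has_derivative (\<lambda>v. Dw y \<bullet> v)) (at y)"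
    and w_D2: "(Dw has_derivative H) (at x)"
    and G': "\<And>r. r \<ge> 0 \<Longrightarrow> (G has_real_derivative G' r) (at r)"
    and G'_deriv: "(G' has_real_derivative G2) (at (x \<bullet> x))"
    and max: "\<And>y. w y - G (y \<bullet> y) \<le> w x - G (x \<bullet> x)"
  shows "Dw x = (2 * G' (x \<bullet> x)) *\<^sub>R x"
    and "H c \<bullet> c \<le> 4 * G2 * (x \<bullet> c)\<^sup>2 + 2 * G' (x \<bullet> x) * (c \<bullet> c)"
proof -
  have along_line: "Dw x \<bullet> c = 2 * G' (x \<bullet> x) * (x \<bullet> c) \<and>
      H c \<bullet> c \<le> 4 * G2 * (x \<bullet> c)\<^sup>2 + 2 * G' (x \<bullet> x) * (c \<bullet> c)" for c
  proof -
    define p where "p t = x + t *\<^sub>R c" for t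
    define f where "f t = w (p t) - G (p t \<bullet> p t)" for t
    define f' where "f' t = Dw (p t) \<bullet> c - G' (p t \<bullet> p t) * (2 * (p t \<bullet> c))" for t
    note G_line = radial_along_line_has_real_derivative[OF G' G'_deriv, of c, folded p_def]
    have f': "(f has_real_derivative f' t) (at t)" for t
      unfolding f_def f'_def
      using DERIV_diff[OF has_real_derivative_along_line[OF w_D1] G_line(1)] by (simp add: p_def)
    have "((\<lambda>y. Dw y \<bullet> c) has_derivative (\<lambda>v. H v \<bullet> c)) (at (x + 0 *\<^sub>R c))"
      using has_derivative_inner_left[OF w_D2, of c] by simp
    from DERIV_diff[OF has_real_derivative_along_line[OF this] G_line(2)]
    have f'': "(f' has_real_derivative
        H c \<bullet> c - (4 * G2 * (x \<bullet> c)\<^sup>2 + 2 * G' (x \<bullet> x) * (c \<bullet> c))) (at 0)"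
      unfolding f'_def p_def .
    have f_max: "f t \<le> f 0" for t
      using max unfolding f_def p_def by simp
    have "f' 0 = 0"
      using DERIV_local_max[OF f' zero_less_one] f_max by blast
    moreover have "H c \<bullet> c - (4 * G2 * (x \<bullet> c)\<^sup>2 + 2 * G' (x \<bullet> x) * (c \<bullet> c)) \<le> 0"
      using deriv2_nonpos_at_global_max[OF f' f'' f_max] .
    ultimately show ?thesis
      unfolding f'_def p_def by simp
  qed
  then show "H c \<bullet> c \<le> 4 * G2 * (x \<bullet> c)\<^sup>2 + 2 * G' (x \<bullet> x) * (c \<bullet> c)"
    by blast
  have "Dw x \<bullet> c = (2 * G' (x \<bullet> x)) *\<^sub>R x \<bullet> c" for c
    using along_line by simp
  then show "Dw x = (2 * G' (x \<bullet> x)) *\<^sub>R x"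
    using vector_eq_rdot by blast
qed

lemma trace_mult_transpose_mult:
  fixes A :: "real^'d^'m" and B :: "real^'m^'m"
  shows "trace (A ** transpose A ** B) = (\<Sum>j\<in>UNIV. column j A \<bullet> (B *v column j A))"
proof -
  have "trace (A ** transpose A ** B) = trace (transpose A ** B ** A)"
    by (metis matrix_mul_assoc trace_mul_sym)
  also have "\<dots> = (\<Sum>j\<in>UNIV. column j A \<bullet> (B *v column j A))"
    unfolding trace_def matrix_matrix_mult_def matrix_vector_mult_def transpose_def column_def inner_vec_def
    by (simp add: sum_distrib_left sum_distrib_right mult_ac)
      (rule sum.cong[OF refl], subst sum.swap, simp add: mult_ac)
  finally show ?thesis .
qed

lemma trace_mult_transpose:
  fixes A :: "real^'d^'m"
  shows "trace (A ** transpose A) = (\<Sum>j\<in>UNIV. column j A \<bullet> column j A)"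
  using trace_mult_transpose_mult[of A "mat 1"] by simp

lemma trace_mult_transpose_nonneg:
  fixes A :: "real^'d^'m"
  shows "0 \<le> trace (A ** transpose A)"
  unfolding trace_mult_transpose by (simp add: sum_nonneg)

lemma trace_mult_transpose_bounded:
  fixes A :: "'a \<Rightarrow> real^'d^'m"
  assumes "\<And>i j. bounded (range (\<lambda>y. A y $ i $ j))"
  shows "\<exists>T. \<forall>y. trace (A y ** transpose (A y)) \<le> T"
proof -
  have "\<forall>i j. \<exists>B. \<forall>y. \<bar>A y $ i $ j\<bar> \<le> B"
    using assms unfolding bounded_iff by (metis rangeI real_norm_def)
  then obtain B where B: "\<And>i j y. \<bar>A y $ i $ j\<bar> \<le> B i j"
    by metis
  have "trace (A y ** transpose (A y)) \<le> (\<Sum>j\<in>UNIV. \<Sum>i\<in>UNIV. (B i j)\<^sup>2)" for y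
    unfolding trace_mult_transpose column_def inner_vec_def
  proof (intro sum_mono)
    fix i j
    have "\<bar>A y $ i $ j\<bar>\<^sup>2 \<le> (B i j)\<^sup>2"
      using B[of y i j] by (intro power_mono) auto
    then show "(\<chi> i. A y $ i $ j) $ i \<bullet> (\<chi> i. A y $ i $ j) $ i \<le> (B i j)\<^sup>2"
      by (simp add: power2_eq_square)
  qed
  then show ?thesis
    by blast
qed

lemma matrix_vector_mult_uminus: "(- A) *v x = - (A *v (x :: 'a::ring_1^'n))"
  by (simp add: matrix_vector_mult_def vec_eq_iff sum_negf)

lemma Lop_columns:
  "Lop tau alpha b y q Y =
     - (\<Sum>j\<in>UNIV. column j (tau y) \<bullet> (Y *v column j (tau y))) + (alpha *\<^sub>R y + b y) \<bullet> q"
  unfolding Lop_def trace_mult_transpose_mult by (simp add: inner_add_left)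

lemma Lop_uminus: "Lop tau alpha b y (- q) (- Y) = - Lop tau alpha b y q Y"
  unfolding Lop_columns matrix_vector_mult_uminus by (simp add: sum_negf)

text \<open>Only the sign of the diffusion term matters: by \<open>Lop_columns\<close> it is a sum of second
  derivatives along the columns of \<open>tau\<close>, each of which the one-dimensional second
  derivative test controls.  No ellipticity is needed.\<close>

lemma Lop_ge_at_radial_touching:
  fixes tau :: "real^'m \<Rightarrow> real^'d^'m" and b :: "real^'m \<Rightarrow> real^'m"
    and w :: "real^'m \<Rightarrow> real" and Dw :: "real^'m \<Rightarrow> real^'m" and D2w :: "real^'m \<Rightarrow> real^'m^'m"
    and G G' :: "real \<Rightarrow> real" and G2 :: real
  assumes w_D1: "\<And>y. (w has_derivative (\<lambda>v. Dw y \<bullet> v)) (at y)"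
    and w_D2: "(Dw has_derivative (\<lambda>v. D2w x *v v)) (at x)"
    and G': "\<And>r. r \<ge> 0 \<Longrightarrow> (G has_real_derivative G' r) (at r)"
    and G'_deriv: "(G' has_real_derivative G2) (at (x \<bullet> x))"
    and max: "\<And>y. w y - G (y \<bullet> y) \<le> w x - G (x \<bullet> x)"
  shows "2 * G' (x \<bullet> x) * (alpha * (x \<bullet> x) + x \<bullet> b x)
           - (\<Sum>j\<in>UNIV. 4 * G2 * (x \<bullet> column j (tau x))\<^sup>2
                         + 2 * G' (x \<bullet> x) * (column j (tau x) \<bullet> column j (tau x)))
         \<le> Lop tau alpha b x (Dw x) (D2w x)"
proof -
  note touching = radial_touching_from_above[OF w_D1 w_D2 G' G'_deriv max]
  have "(\<Sum>j\<in>UNIV. column j (tau x) \<bullet> (D2w x *v column j (tau x)))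
      \<le> (\<Sum>j\<in>UNIV. 4 * G2 * (x \<bullet> column j (tau x))\<^sup>2
                   + 2 * G' (x \<bullet> x) * (column j (tau x) \<bullet> column j (tau x)))"
    using touching(2) by (intro sum_mono) (metis inner_commute)
  moreover have "(alpha *\<^sub>R x + b x) \<bullet> Dw x = 2 * G' (x \<bullet> x) * (alpha * (x \<bullet> x) + x \<bullet> b x)"
    by (simp add: touching(1) inner_add_left inner_commute algebra_simps)
  ultimately show ?thesis
    unfolding Lop_columns by linarith
qed

text \<open>The barrier as a function of \<open>r = |y|\<^sup>2\<close>: the logarithm is the growth bound we are after,
  while the power \<open>Suc k\<close> dominates the polynomial growth of \<open>w\<close>, so that \<open>w\<close> minus the
  barrier attains its maximum.\<close>

definition barrier :: "real \<Rightarrow> real \<Rightarrow> nat \<Rightarrow> real \<Rightarrow> real" where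
  "barrier K e k r = K * ln (1 + r) + e * (1 + r) ^ Suc k"

lemma barrier_nonneg: "K \<ge> 0 \<Longrightarrow> e \<ge> 0 \<Longrightarrow> r \<ge> 0 \<Longrightarrow> barrier K e k r \<ge> 0"
  unfolding barrier_def by simp

lemma barrier_has_real_derivative:
  assumes "r > -1"
  shows "(barrier K e k has_real_derivative K / (1 + r) + e * Suc k * (1 + r) ^ k) (at r)"
  unfolding barrier_def using assms
  by (auto intro!: derivative_eq_intros simp del: power_Suc simp: field_simps)

lemma barrier_deriv_has_real_derivative:
  fixes K e r :: real
  assumes "r > -1"
  shows "((\<lambda>r. K / (1 + r) + e * Suc k * (1 + r) ^ k) has_real_derivative
           - K / (1 + r)\<^sup>2 + e * Suc k * k * (1 + r) ^ (k - 1)) (at r)"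
  using assms by (auto intro!: derivative_eq_intros simp: field_simps power2_eq_square)

lemma barrier_second_deriv_bound:
  fixes y c :: "'a::real_inner" and K e :: real
  assumes "K \<ge> 0" "e \<ge> 0"
  shows "(- K / (1 + y \<bullet> y)\<^sup>2 + e * Suc k * k * (1 + y \<bullet> y) ^ (k - 1)) * (y \<bullet> c)\<^sup>2
           \<le> k * (e * Suc k * (1 + y \<bullet> y) ^ k) * (c \<bullet> c)"
proof -
  define r where "r = y \<bullet> y"
  have "r \<ge> 0"
    by (simp add: r_def)
  have pow_bound: "k * (1 + r) ^ (k - 1) * r \<le> k * (1 + r) ^ k"
  proof (cases k)
    case (Suc j)
    have "(1 + r) ^ j * r \<le> (1 + r) ^ j * (1 + r)"
      using \<open>r \<ge> 0\<close> by (intro mult_left_mono) auto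
    then show ?thesis
      using Suc by (simp add: mult_ac)
  qed simp
  have "(y \<bullet> c)\<^sup>2 \<le> r * (c \<bullet> c)"
    unfolding r_def by (rule Cauchy_Schwarz_ineq)
  then have "e * Suc k * k * (1 + r) ^ (k - 1) * (y \<bullet> c)\<^sup>2
      \<le> e * Suc k * k * (1 + r) ^ (k - 1) * (r * (c \<bullet> c))"
    using assms \<open>r \<ge> 0\<close> by (intro mult_left_mono) auto
  also have "\<dots> = e * Suc k * (c \<bullet> c) * (k * (1 + r) ^ (k - 1) * r)"
    by (simp add: mult_ac)
  also have "\<dots> \<le> e * Suc k * (c \<bullet> c) * (k * (1 + r) ^ k)"
    using assms pow_bound by (intro mult_left_mono) auto
  finally have power_term: "e * Suc k * k * (1 + r) ^ (k - 1) * (y \<bullet> c)\<^sup>2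
      \<le> e * Suc k * (c \<bullet> c) * (k * (1 + r) ^ k)" .
  have log_term: "(- K / (1 + r)\<^sup>2) * (y \<bullet> c)\<^sup>2 \<le> 0"
    using assms by (simp add: mult_nonpos_nonneg)
  from power_term log_term show ?thesis
    unfolding r_def[symmetric] by (simp add: algebra_simps)
qed

lemma barrier_diffusion_le:
  fixes x :: "'a::real_inner" and \<sigma> :: "'d::finite \<Rightarrow> 'a" and K e :: real and k :: nat
  assumes "K \<ge> 0" "e \<ge> 0" and \<sigma>_bound: "(\<Sum>j\<in>UNIV. \<sigma> j \<bullet> \<sigma> j) \<le> T"
  defines "E \<equiv> e * Suc k * (1 + x \<bullet> x) ^ k"
    and "G2 \<equiv> - K / (1 + x \<bullet> x)\<^sup>2 + e * Suc k * k * (1 + x \<bullet> x) ^ (k - 1)"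
  shows "(\<Sum>j\<in>UNIV. 4 * G2 * (x \<bullet> \<sigma> j)\<^sup>2 + 2 * (K / (1 + x \<bullet> x) + E) * (\<sigma> j \<bullet> \<sigma> j))
           \<le> (4 * real k * E + 2 * (K / (1 + x \<bullet> x) + E)) * T"
proof -
  have "4 * G2 * (x \<bullet> \<sigma> j)\<^sup>2 + 2 * (K / (1 + x \<bullet> x) + E) * (\<sigma> j \<bullet> \<sigma> j)
      \<le> (4 * real k * E + 2 * (K / (1 + x \<bullet> x) + E)) * (\<sigma> j \<bullet> \<sigma> j)" for j
  proof -
    have "G2 * (x \<bullet> \<sigma> j)\<^sup>2 \<le> real k * E * (\<sigma> j \<bullet> \<sigma> j)"
      unfolding G2_def E_def by (rule barrier_second_deriv_bound[OF assms(1,2)])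
    moreover have "(4 * real k * E + 2 * (K / (1 + x \<bullet> x) + E)) * (\<sigma> j \<bullet> \<sigma> j)
        = 4 * (real k * E * (\<sigma> j \<bullet> \<sigma> j)) + 2 * (K / (1 + x \<bullet> x) + E) * (\<sigma> j \<bullet> \<sigma> j)"
      by (simp add: algebra_simps)
    ultimately show ?thesis
      by simp
  qed
  then have "(\<Sum>j\<in>UNIV. 4 * G2 * (x \<bullet> \<sigma> j)\<^sup>2 + 2 * (K / (1 + x \<bullet> x) + E) * (\<sigma> j \<bullet> \<sigma> j))
      \<le> (4 * real k * E + 2 * (K / (1 + x \<bullet> x) + E)) * (\<Sum>j\<in>UNIV. \<sigma> j \<bullet> \<sigma> j)"
    unfolding sum_distrib_left by (rule sum_mono)
  also have "\<dots> \<le> (4 * real k * E + 2 * (K / (1 + x \<bullet> x) + E)) * T"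
    using \<sigma>_bound assms(1,2) by (intro mult_left_mono) (simp_all add: E_def)
  finally show ?thesis .
qed

text \<open>Drift against diffusion at a touching point with \<open>|x|\<^sup>2 = r\<close>: \<open>K / (1 + r) + E\<close> is the
  barrier's first derivative and \<open>X\<close> stands for \<open>alpha r + x \<bullet> b x\<close>.\<close>

lemma barrier_drift_inequality:
  fixes K E T B alpha r \<rho> X :: real and k :: nat
  assumes "K \<ge> 0" "E \<ge> 0" "T \<ge> 0" "alpha > 0" "r \<ge> 0" "B * \<rho> \<ge> 0"
    and far: "2 * B * \<rho> + 2 * T * (2 * real k + 1) + alpha \<le> alpha * r"
    and X: "alpha * r - B * \<rho> \<le> X"
  shows "K * alpha \<le> 2 * (K / (1 + r) + E) * X - (4 * real k * E + 2 * (K / (1 + r) + E)) * T"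
proof -
  have Tk: "T * real k \<ge> 0"
    using assms by simp
  have far': "2 * (B * \<rho>) + 4 * (T * real k) + 2 * T + alpha \<le> alpha * r"
    using far by (simp add: algebra_simps)
  have "alpha * (1 + r) / 2 = alpha / 2 + alpha * r / 2"
    by (simp add: field_simps)
  then have XT: "alpha * (1 + r) / 2 \<le> X - T"
    using far' X Tk assms by linarith
  have XTk: "0 \<le> X - T - 2 * (T * real k)"
    using far' X Tk assms by linarith
  have "K * alpha = 2 * (K / (1 + r)) * (alpha * (1 + r) / 2)"
    using \<open>r \<ge> 0\<close> by (simp add: field_simps)
  also have "\<dots> \<le> 2 * (K / (1 + r)) * (X - T)"
    using XT assms by (intro mult_left_mono) auto
  finally have "K * alpha \<le> 2 * (K / (1 + r)) * (X - T)" .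
  moreover have "0 \<le> 2 * E * (X - T - 2 * (T * real k))"
    using XTk assms by simp
  moreover have "2 * (K / (1 + r) + E) * X - (4 * real k * E + 2 * (K / (1 + r) + E)) * T
      = 2 * (K / (1 + r)) * (X - T) + 2 * E * (X - T - 2 * (T * real k))"
    by (simp add: algebra_simps add_divide_distrib[symmetric])
  ultimately show ?thesis
    by linarith
qed

lemma Lop_ge_at_barrier_touching:
  fixes tau :: "real^'m \<Rightarrow> real^'d^'m" and b :: "real^'m \<Rightarrow> real^'m"
    and w :: "real^'m \<Rightarrow> real" and Dw :: "real^'m \<Rightarrow> real^'m" and D2w :: "real^'m \<Rightarrow> real^'m^'m"
    and K e :: real
  assumes "alpha > 0" "K \<ge> 0" "e \<ge> 0"
    and tau_bound: "trace (tau x ** transpose (tau x)) \<le> T"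
    and b_bound: "norm (b x) \<le> B"
    and w_D1: "\<And>y. (w has_derivative (\<lambda>v. Dw y \<bullet> v)) (at y)"
    and w_D2: "(Dw has_derivative (\<lambda>v. D2w x *v v)) (at x)"
    and max: "\<And>y. w y - barrier K e k (y \<bullet> y) \<le> w x - barrier K e k (x \<bullet> x)"
    and far: "2 * B * norm x + 2 * T * (2 * real k + 1) + alpha \<le> alpha * (norm x)\<^sup>2"
  shows "K * alpha \<le> Lop tau alpha b x (Dw x) (D2w x)"
proof -
  define r where "r = x \<bullet> x"
  define E where "E = e * Suc k * (1 + r) ^ k"
  define G1 where "G1 = K / (1 + r) + E"
  define G2 where "G2 = - K / (1 + r)\<^sup>2 + e * Suc k * k * (1 + r) ^ (k - 1)"
  define \<sigma> where "\<sigma> j = column j (tau x)" for j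
  have "r \<ge> 0" "E \<ge> 0"
    using assms by (simp_all add: r_def E_def)
  have "B \<ge> 0"
    using b_bound norm_ge_zero order_trans by blast
  have \<sigma>_bound: "(\<Sum>j\<in>UNIV. \<sigma> j \<bullet> \<sigma> j) \<le> T"
    using tau_bound by (simp add: trace_mult_transpose \<sigma>_def)
  have "T \<ge> 0"
    using tau_bound trace_mult_transpose_nonneg order_trans by blast
  have G': "(barrier K e k has_real_derivative K / (1 + s) + e * Suc k * (1 + s) ^ k) (at s)"
    if "s \<ge> 0" for s
    using that by (intro barrier_has_real_derivative) simp
  have G'': "((\<lambda>s. K / (1 + s) + e * Suc k * (1 + s) ^ k) has_real_derivative G2) (at (x \<bullet> x))"
    unfolding G2_def r_def
    by (intro barrier_deriv_has_real_derivative) (use inner_ge_zero[of x] in linarith)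
  have "2 * G1 * (alpha * r + x \<bullet> b x)
      - (\<Sum>j\<in>UNIV. 4 * G2 * (x \<bullet> \<sigma> j)\<^sup>2 + 2 * G1 * (\<sigma> j \<bullet> \<sigma> j))
      \<le> Lop tau alpha b x (Dw x) (D2w x)"
    using Lop_ge_at_radial_touching[where w = w and Dw = Dw and D2w = D2w and x = x,
        OF w_D1 w_D2 G' G'' max]
    unfolding r_def G1_def E_def \<sigma>_def by simp
  moreover have "(\<Sum>j\<in>UNIV. 4 * G2 * (x \<bullet> \<sigma> j)\<^sup>2 + 2 * G1 * (\<sigma> j \<bullet> \<sigma> j))
      \<le> (4 * real k * E + 2 * G1) * T"
    unfolding G1_def G2_def E_def r_def by (rule barrier_diffusion_le[OF assms(2,3) \<sigma>_bound])
  moreover have "alpha * r - B * norm x \<le> alpha * r + x \<bullet> b x"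
    using Cauchy_Schwarz_ineq2[of x "b x"] mult_left_mono[OF b_bound norm_ge_zero[of x]]
    by (simp add: mult.commute)
  then have "K * alpha \<le> 2 * G1 * (alpha * r + x \<bullet> b x) - (4 * real k * E + 2 * G1) * T"
    unfolding G1_def using far \<open>B \<ge> 0\<close> \<open>T \<ge> 0\<close> \<open>r \<ge> 0\<close> \<open>E \<ge> 0\<close> assms
    by (intro barrier_drift_inequality) (simp_all add: r_def power2_norm_eq_inner)
  ultimately show ?thesis
    by linarith
qed

lemma continuous_attains_global_max:
  fixes u :: "'a::heine_borel \<Rightarrow> real"
  assumes cont: "continuous_on UNIV u" and bdd: "bounded {y. u a \<le> u y}"
  shows "\<exists>x. \<forall>y. u y \<le> u x"
proof -
  let ?S = "{y. u a \<le> u y}"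
  have "closed ?S"
    by (rule closed_Collect_le[OF continuous_on_const cont])
  with bdd have "compact ?S"
    by (simp add: compact_eq_bounded_closed)
  moreover have "a \<in> ?S"
    by simp
  ultimately obtain x where "x \<in> ?S" and x_max: "\<forall>y\<in>?S. u y \<le> u x"
    using continuous_attains_sup[of ?S u] continuous_on_subset[OF cont] by blast
  then have "u y \<le> u x" for y
    by (cases "y \<in> ?S") auto
  then show ?thesis
    by blast
qed

lemma norm_less_one_plus_inner_self: "norm y < 1 + y \<bullet> y"
proof -
  have "0 < (norm y - 1/2)\<^sup>2 + 3/4"
    by (simp add: add_nonneg_pos)
  then show ?thesis
    unfolding dot_square_norm by (simp add: power2_eq_square algebra_simps)
qed

lemma bounded_superlevel_minus_barrier:
  fixes w :: "'a::real_inner \<Rightarrow> real"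
  assumes "e > 0" "K \<ge> 0" and growth: "\<And>y. w y \<le> K0 * (1 + norm y ^ k)"
  shows "bounded {y. c \<le> w y - barrier K e k (y \<bullet> y)}"
proof -
  define \<rho> where "\<rho> = (2 * \<bar>K0\<bar> + \<bar>c\<bar>) / e"
  have "w y - barrier K e k (y \<bullet> y) < c" if "norm y > \<rho>" for y
  proof -
    define r where "r = y \<bullet> y"
    have "r \<ge> 0"
      by (simp add: r_def)
    have "norm y < 1 + r"
      unfolding r_def by (rule norm_less_one_plus_inner_self)
    have "1 \<le> (1 + r) ^ k"
      using \<open>r \<ge> 0\<close> by simp
    have "w y \<le> \<bar>K0\<bar> * (1 + norm y ^ k)"
      using growth[of y] by (smt (verit) abs_ge_self mult_right_mono zero_le_power norm_ge_zero)
    also have "\<dots> \<le> \<bar>K0\<bar> * (2 * (1 + r) ^ k)"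
    proof -
      have "norm y ^ k \<le> (1 + r) ^ k"
        using \<open>norm y < 1 + r\<close> by (intro power_mono) auto
      with \<open>1 \<le> (1 + r) ^ k\<close> show ?thesis
        by (intro mult_left_mono) auto
    qed
    moreover have "K * ln (1 + r) \<ge> 0"
      using \<open>r \<ge> 0\<close> assms by simp
    ultimately have "w y - barrier K e k r \<le> (1 + r) ^ k * (2 * \<bar>K0\<bar> - e * (1 + r))"
      unfolding barrier_def by (simp add: algebra_simps)
    moreover have "e * (1 + r) > 2 * \<bar>K0\<bar> + \<bar>c\<bar>"
    proof -
      have "2 * \<bar>K0\<bar> + \<bar>c\<bar> = e * \<rho>"
        using \<open>e > 0\<close> by (simp add: \<rho>_def)
      also have "\<dots> < e * (1 + r)"
        using that \<open>norm y < 1 + r\<close> \<open>e > 0\<close> by simp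
      finally show ?thesis .
    qed
    then have "(1 + r) ^ k * (2 * \<bar>K0\<bar> - e * (1 + r)) \<le> 2 * \<bar>K0\<bar> - e * (1 + r)"
      using mult_right_mono_neg[OF \<open>1 \<le> (1 + r) ^ k\<close>, of "2 * \<bar>K0\<bar> - e * (1 + r)"] by simp
    ultimately show ?thesis
      using \<open>e * (1 + r) > 2 * \<bar>K0\<bar> + \<bar>c\<bar>\<close> by (simp add: r_def)
  qed
  then have "{y. c \<le> w y - barrier K e k (y \<bullet> y)} \<subseteq> cball 0 \<rho>"
    by (force simp: not_less)
  then show ?thesis
    using bounded_cball bounded_subset by blast
qed

lemma linear_le_quadratic_beyond:
  fixes alpha B D \<rho> :: real
  assumes "alpha > 0" "D \<ge> 0" and beyond: "max 1 ((2 * B + D + alpha) / alpha) < \<rho>"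
  shows "2 * B * \<rho> + D + alpha \<le> alpha * \<rho>\<^sup>2"
proof -
  have "1 \<le> \<rho>" and "2 * B + D + alpha \<le> alpha * \<rho>"
    using beyond \<open>alpha > 0\<close> by (simp_all add: pos_divide_less_eq mult.commute)
  then have "\<rho> * (2 * B + D + alpha) \<le> \<rho> * (alpha * \<rho>)"
    by (intro mult_left_mono) auto
  moreover have "D + alpha \<le> \<rho> * (D + alpha)"
    using mult_right_mono[OF \<open>1 \<le> \<rho>\<close>, of "D + alpha"] assms by simp
  ultimately show ?thesis
    by (simp add: power2_eq_square algebra_simps)
qed

lemma Lop_subsolution_le_barrier:
  fixes tau :: "real^'m \<Rightarrow> real^'d^'m" and b :: "real^'m \<Rightarrow> real^'m"
    and w :: "real^'m \<Rightarrow> real" and Dw :: "real^'m \<Rightarrow> real^'m" and D2w :: "real^'m \<Rightarrow> real^'m^'m"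
    and K e :: real
  assumes "alpha > 0" "K \<ge> 0" "e > 0"
    and tau_bound: "\<And>y. trace (tau y ** transpose (tau y)) \<le> T"
    and b_bound: "\<And>y. norm (b y) \<le> B"
    and w_D1: "\<And>y. (w has_derivative (\<lambda>v. Dw y \<bullet> v)) (at y)"
    and w_D2: "\<And>y. (Dw has_derivative (\<lambda>v. D2w y *v v)) (at y)"
    and sub: "\<And>y. Lop tau alpha b y (Dw y) (D2w y) \<le> M" and "M < K * alpha"
    and growth: "\<And>y. w y \<le> K0 * (1 + norm y ^ k)"
    and W: "\<And>y. norm y \<le> max 1 ((2 * B + 2 * T * (2 * real k + 1) + alpha) / alpha) \<Longrightarrow> w y \<le> W"
  shows "w y \<le> barrier K e k (y \<bullet> y) + W"
proof -
  let ?u = "\<lambda>y. w y - barrier K e k (y \<bullet> y)"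
  have "continuous_on UNIV w"
    by (intro continuous_at_imp_continuous_on ballI has_derivative_continuous[OF w_D1])
  moreover have "1 + y \<bullet> y \<noteq> 0" for y :: "real^'m"
    by (smt (verit) inner_ge_zero)
  ultimately have "continuous_on UNIV ?u"
    unfolding barrier_def by (intro continuous_intros) auto
  moreover have "bounded {y. ?u 0 \<le> ?u y}"
    using bounded_superlevel_minus_barrier[OF \<open>e > 0\<close> \<open>K \<ge> 0\<close> growth] .
  ultimately obtain x where max: "\<And>y. ?u y \<le> ?u x"
    using continuous_attains_global_max by blast
  have "T \<ge> 0"
    using tau_bound[of 0] trace_mult_transpose_nonneg order_trans by blast
  have "norm x \<le> max 1 ((2 * B + 2 * T * (2 * real k + 1) + alpha) / alpha)"
  proof (rule ccontr)
    assume "\<not> ?thesis"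
    then have "2 * B * norm x + 2 * T * (2 * real k + 1) + alpha \<le> alpha * (norm x)\<^sup>2"
      using \<open>alpha > 0\<close> \<open>T \<ge> 0\<close> by (intro linear_le_quadratic_beyond) (simp_all add: not_le)
    then have "K * alpha \<le> Lop tau alpha b x (Dw x) (D2w x)"
      using Lop_ge_at_barrier_touching[where tau = tau and b = b and x = x and w = w and Dw = Dw
          and D2w = D2w, OF \<open>alpha > 0\<close> \<open>K \<ge> 0\<close> less_imp_le[OF \<open>e > 0\<close>] tau_bound b_bound
          w_D1 w_D2 max]
      by blast
    with sub[of x] \<open>M < K * alpha\<close> show False
      by linarith
  qed
  then have "w x \<le> W"
    by (rule W)
  then show ?thesis
    using max[of y] barrier_nonneg[OF \<open>K \<ge> 0\<close> less_imp_le[OF \<open>e > 0\<close>] inner_ge_zero[of x], of k]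
    by simp
qed

lemma Lop_subsolution_log_bound:
  fixes tau :: "real^'m \<Rightarrow> real^'d^'m" and b :: "real^'m \<Rightarrow> real^'m"
    and w :: "real^'m \<Rightarrow> real" and Dw :: "real^'m \<Rightarrow> real^'m" and D2w :: "real^'m \<Rightarrow> real^'m^'m"
  assumes "alpha > 0"
    and tau_bound: "\<And>y. trace (tau y ** transpose (tau y)) \<le> T"
    and b_bound: "\<And>y. norm (b y) \<le> B"
    and w_D1: "\<And>y. (w has_derivative (\<lambda>v. Dw y \<bullet> v)) (at y)"
    and w_D2: "\<And>y. (Dw has_derivative (\<lambda>v. D2w y *v v)) (at y)"
    and sub: "\<And>y. Lop tau alpha b y (Dw y) (D2w y) \<le> M"
    and growth: "\<And>y. w y \<le> K0 * (1 + norm y ^ k)"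
  shows "\<exists>C>0. \<forall>y. w y \<le> C * (1 + ln (1 + (norm y)\<^sup>2))"
proof -
  define K where "K = (\<bar>M\<bar> + 1) / alpha"
  define R where "R = max 1 ((2 * B + 2 * T * (2 * real k + 1) + alpha) / alpha)"
  have "K \<ge> 0" and "M < K * alpha"
    using \<open>alpha > 0\<close> by (simp_all add: K_def)
  have "continuous_on (cball 0 R) w"
    by (intro continuous_at_imp_continuous_on ballI has_derivative_continuous[OF w_D1])
  moreover have "cball (0 :: real^'m) R \<noteq> {}"
    by (simp add: R_def)
  ultimately obtain x0 where "\<forall>y\<in>cball 0 R. w y \<le> w x0"
    using continuous_attains_sup[OF compact_cball] by blast
  then have W: "\<And>y. norm y \<le> R \<Longrightarrow> w y \<le> w x0"
    by simp
  note barrier_bound = Lop_subsolution_le_barrier[OF \<open>alpha > 0\<close> \<open>K \<ge> 0\<close> _ tau_bound b_bound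
      w_D1 w_D2 sub \<open>M < K * alpha\<close> growth W[unfolded R_def]]
  have log_bound: "w y \<le> K * ln (1 + y \<bullet> y) + w x0" for y
  proof (rule field_le_epsilon)
    fix d :: real
    assume "d > 0"
    define P where "P = (1 + y \<bullet> y) ^ Suc k"
    have "P > 0"
      unfolding P_def by (simp add: add_pos_nonneg)
    then have "barrier K (d / P) k (y \<bullet> y) = K * ln (1 + y \<bullet> y) + d"
      unfolding barrier_def P_def[symmetric] by simp
    then show "w y \<le> K * ln (1 + y \<bullet> y) + w x0 + d"
      using barrier_bound[of "d / P" y] \<open>d > 0\<close> \<open>P > 0\<close> by simp
  qed
  define C where "C = max (max K (w x0)) 1"
  have "w y \<le> C * (1 + ln (1 + (norm y)\<^sup>2))" for y
  proof -
    have "K * ln (1 + (norm y)\<^sup>2) \<le> C * ln (1 + (norm y)\<^sup>2)"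
      by (intro mult_right_mono) (auto simp: C_def)
    then show ?thesis
      using log_bound[of y] by (simp add: C_def power2_norm_eq_inner algebra_simps)
  qed
  moreover have "C > 0"
    by (simp add: C_def)
  ultimately show ?thesis
    by blast
qed

lemma Lop_solution_log_bound:
  fixes tau :: "real^'m \<Rightarrow> real^'d^'m" and b :: "real^'m \<Rightarrow> real^'m"
    and w :: "real^'m \<Rightarrow> real" and Dw :: "real^'m \<Rightarrow> real^'m" and D2w :: "real^'m \<Rightarrow> real^'m^'m"
  assumes alpha_pos: "alpha > 0"
    and tau_bound: "\<And>y. trace (tau y ** transpose (tau y)) \<le> T"
    and b_bound: "\<And>y. norm (b y) \<le> B"
    and w_D1: "\<And>y. (w has_derivative (\<lambda>v. Dw y \<bullet> v)) (at y)"
    and w_D2: "\<And>y. (Dw has_derivative (\<lambda>v. D2w y *v v)) (at y)"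
    and Lop_bound: "\<And>y. \<bar>Lop tau alpha b y (Dw y) (D2w y)\<bar> \<le> M"
    and growth: "\<And>y. \<bar>w y\<bar> \<le> K0 * (1 + norm y ^ k)"
  shows "\<exists>C>0. \<forall>y. \<bar>w y\<bar> \<le> C * (1 + ln (1 + (norm y)\<^sup>2))"
proof -
  have sub_w: "Lop tau alpha b y (Dw y) (D2w y) \<le> M"
    and sub_neg_w: "Lop tau alpha b y (- Dw y) (- D2w y) \<le> M" for y
    using Lop_bound[of y] unfolding Lop_uminus by linarith+
  have neg_D1: "((\<lambda>y. - w y) has_derivative (\<lambda>v. (- Dw y) \<bullet> v)) (at y)"
    and neg_D2: "((\<lambda>y. - Dw y) has_derivative (\<lambda>v. (- D2w y) *v v)) (at y)" for y
    using has_derivative_minus[OF w_D1[of y]] has_derivative_minus[OF w_D2[of y]]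
    by (simp_all add: matrix_vector_mult_uminus)
  have growth_w: "w y \<le> K0 * (1 + norm y ^ k)" and growth_neg_w: "- w y \<le> K0 * (1 + norm y ^ k)" for y
    using growth[of y] by linarith+
  obtain Cp where "Cp > 0" and upper: "\<And>y. w y \<le> Cp * (1 + ln (1 + (norm y)\<^sup>2))"
    using Lop_subsolution_log_bound[OF alpha_pos tau_bound b_bound w_D1 w_D2 sub_w growth_w] by blast
  obtain Cm where "Cm > 0" and lower: "\<And>y. - w y \<le> Cm * (1 + ln (1 + (norm y)\<^sup>2))"
    using Lop_subsolution_log_bound[OF alpha_pos tau_bound b_bound neg_D1 neg_D2 sub_neg_w growth_neg_w]
    by blast
  have "\<bar>w y\<bar> \<le> max Cp Cm * (1 + ln (1 + (norm y)\<^sup>2))" for y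
    using upper[of y] lower[of y] mult_right_mono[of Cp "max Cp Cm" "1 + ln (1 + (norm y)\<^sup>2)"]
      mult_right_mono[of Cm "max Cp Cm" "1 + ln (1 + (norm y)\<^sup>2)"]
    by auto
  with \<open>Cp > 0\<close> show ?thesis
    by (intro exI[of _ "max Cp Cm"]) auto
qed

lemma mult_one_plus_ln_le_linear:
  fixes A eta r :: real
  assumes "A > 0" "eta > 0" "r \<ge> 0"
  shows "A * (1 + ln (1 + r)) - eta * r \<le> A * ln A - A * ln eta + eta"
proof -
  have "ln ((1 + r) * eta / A) \<le> (1 + r) * eta / A - 1"
    using assms by (intro ln_le_minus_one) simp
  moreover have "ln ((1 + r) * eta / A) = ln (1 + r) + ln eta - ln A"
    using assms by (simp add: ln_div ln_mult)
  ultimately have "A * ln (1 + r) \<le> A * ((1 + r) * eta / A - 1 + ln A - ln eta)"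
    using assms by (intro mult_left_mono) auto
  also have "\<dots> = (1 + r) * eta - A + A * ln A - A * ln eta"
    using assms by (simp add: field_simps)
  finally show ?thesis
    by (simp add: algebra_simps)
qed

theorem lemma4p2:
  fixes tau :: "real^'m \<Rightarrow> real^'d^'m"
    and b :: "real^'m \<Rightarrow> real^'m"
    and alpha theta C1 lambda1 :: real
    and g :: "real^'m \<Rightarrow> real"
    and h :: "real^'n \<Rightarrow> real"
    and f :: "real^'n \<Rightarrow> real^'m \<Rightarrow> real"
    and w :: "real^'m \<Rightarrow> real"
    and Dw :: "real^'m \<Rightarrow> real^'m"
    and D2w :: "real^'m \<Rightarrow> real^'m^'m"
  assumes alpha_pos: "alpha > 0"
    and tau_bdd: "\<And>i j. bounded (range (\<lambda>y. tau y $ i $ j))"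
    and tau_lip: "\<And>i j. \<exists>L. L-lipschitz_on UNIV (\<lambda>y. tau y $ i $ j)"
    and b_bdd: "bounded (range b)"
    and b_lip: "\<exists>L. L-lipschitz_on UNIV b"
    and theta_pos: "theta > 0"
    and ellip: "\<And>y xi. xi \<bullet> ((tau y ** transpose (tau y)) *v xi) \<ge> theta * (norm xi)\<^sup>2"
    and g_bdd: "bounded (range g)"
    and g_lip: "\<exists>L. L-lipschitz_on UNIV g"
    and h_lip: "\<exists>L. L-lipschitz_on UNIV h"
    and C1_pos: "C1 > 0"
    and h_bound: "\<And>x. \<bar>h x\<bar> \<le> C1"
    and f_def: "\<And>x y. f x y = h x * g y"
    and w_D1: "\<And>y. (w has_derivative (\<lambda>v. Dw y \<bullet> v)) (at y)"
    and w_D2: "\<And>y. (Dw has_derivative (\<lambda>v. D2w y *v v)) (at y)"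
    and w_C2: "continuous_on UNIV D2w"
    and cell: "\<And>y. Lop tau alpha b y (Dw y) (D2w y) + g y = lambda1"
    and w0: "w 0 = 0"
    and w_poly: "\<exists>K k. \<forall>y. \<bar>w y\<bar> \<le> K * (1 + norm y ^ k)"
  shows "\<exists>C5 > 0.
           (\<forall>y. \<bar>w y\<bar> \<le> C5 * (1 + ln (1 + (norm y)\<^sup>2)))
         \<and> (\<forall>eta > 0. \<forall>x y. \<bar>h x * w y\<bar> - eta * (norm y)\<^sup>2
               \<le> C1 * C5 * ln (C1 * C5) - C1 * C5 * ln eta + eta)"
proof -
  obtain T where T: "\<And>y. trace (tau y ** transpose (tau y)) \<le> T"
    using trace_mult_transpose_bounded[OF tau_bdd] by blast
  obtain B where B: "\<And>y. norm (b y) \<le> B"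
    using b_bdd unfolding bounded_iff by blast
  obtain G where G: "\<And>y. \<bar>g y\<bar> \<le> G"
    using g_bdd unfolding bounded_iff by (metis rangeI real_norm_def)
  obtain K0 k where growth: "\<And>y. \<bar>w y\<bar> \<le> K0 * (1 + norm y ^ k)"
    using w_poly by blast
  have Lop_bound: "\<bar>Lop tau alpha b y (Dw y) (D2w y)\<bar> \<le> \<bar>lambda1\<bar> + G" for y
    using cell[of y] G[of y] by linarith
  obtain C5 where "C5 > 0" and w_bound: "\<And>y. \<bar>w y\<bar> \<le> C5 * (1 + ln (1 + (norm y)\<^sup>2))"
    using Lop_solution_log_bound[where tau = tau and b = b and w = w and Dw = Dw and D2w = D2w,
        OF alpha_pos T B w_D1 w_D2 Lop_bound growth]
    by blast
  have "\<bar>h x * w y\<bar> - eta * (norm y)\<^sup>2 \<le> C1 * C5 * ln (C1 * C5) - C1 * C5 * ln eta + eta"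
    if "eta > 0" for eta x y
  proof -
    have "\<bar>h x * w y\<bar> \<le> C1 * C5 * (1 + ln (1 + (norm y)\<^sup>2))"
      using h_bound[of x] w_bound[of y] by (simp add: abs_mult mult.assoc mult_mono)
    then show ?thesis
      using mult_one_plus_ln_le_linear[of "C1 * C5" eta "(norm y)\<^sup>2"] C1_pos \<open>C5 > 0\<close> that
      by simp
  qed
  with w_bound \<open>C5 > 0\<close> show ?thesis
    by blast
qed

end
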